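(* Assume $f$ has a unique global maximizer $g$ and the problem contains no weak epistasis. Then for every $v\in V$, $\mathcal C(\mathcal M_{SO}(v))=\mathcal{IN}^*(v)$; consequently the minimum stationary optimum of $v$ is unique and equals $\{(u,g[u]):u\in\mathcal{IN}^*(v)\}$.
   Context: Fix $\ell\ge1$, loci $V=\{0,\dots,\ell-1\}$, chromosomes $\vec y\in\{0,1\}^V$, fitness $f:\{0,1\}^V\to\mathbb R$ (maximized) with unique global maximizer $g$. An assignment $A$ is a set of pairs $(v,a)$ ($v\in V$, $a\in\{0,1\}$) with at most one pair per locus; $A[v]=a$ if $(v,a)\in A$, else $A[v]=*$; coverage $\mathcal C(A)=\{v:A[v]\ne*\}$. $\Psi_A$ (constrained optima) is the set of chromosomes agreeing with $A$ on $\mathcal C(A)$ with maximum fitness among such chromosomes; $\Psi_A[v]=\{\psi_v:\psi\in\Psi_A\}$. For full assignments $B$, $f(B)$ is the fitness of the corresponding chromosome. Epistasis: for $v\in V$ and nonempty $S\subseteq V\setminus\{v\}$, $S\Rightarrow v$ iff for every $s\in S$ there exists an assignment $A$ with $\mathcal C(A)=S$ and $\Psi_A[v]\neq\Psi_{A\setminus\{(s,A[s])\}}[v]$; the empty set is never epistatic. An epistasis $S\Rightarrow v$ with $|S|\ge2$ is weak if no nonempty proper subset $T\subsetneq S$ has $T\Rightarrow v$; "no weak epistasis" means no epistasis is weak. The epistatic graph (EG) is the directed graph on $V$ with an edge $u\to v$ iff $\{u\}\Rightarrow v$. $\mathcal{IN}^0(v)=\{v\}$, $\mathcal{IN}^i(v)=\{u:\exists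 w\in\mathcal{IN}^{i-1}(v),\ \{u\}\Rightarrow w\}$ for $i\ge1$, $\mathcal{IN}^*(v)=\bigcup_{i=0}^{\ell-1}\mathcal{IN}^i(v)$. A stationary optimum is a nonempty assignment $A$ such that for every assignment $A'\neq A$ with $\mathcal C(A')=\mathcal C(A)$ and every assignment $R$ with $\mathcal C(R)=V\setminus\mathcal C(A)$, $f(A\cup R)>f(A'\cup R)$. The minimum stationary optimum $\mathcal M_{SO}(v)$ of locus $v$ is a stationary optimum $A$ with $v\in\mathcal C(A)$ of minimum size. *)

theory Defs
  imports Complex_Main
begin

text \<open>An assignment is a partial map from loci to bits
  (at most one value per locus); its coverage is its domain.
  The fitness f is a real-valued function; only its values on chromosomes matter.\<close>

type_synonym assignment = "nat \<rightharpoonup> bool"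

definition loci :: "nat \<Rightarrow> nat set" where
  "loci l = {..<l}"

definition chroms :: "nat \<Rightarrow> assignment set" where
  "chroms l = {y. dom y = loci l}"

definition is_assignment :: "nat \<Rightarrow> assignment \<Rightarrow> bool" where
  "is_assignment l A \<longleftrightarrow> dom A \<subseteq> loci l"

definition Psi :: "nat \<Rightarrow> (assignment \<Rightarrow> real) \<Rightarrow> assignment \<Rightarrow> assignment set" where
  "Psi l f A = {y \<in> chroms l. A \<subseteq>\<^sub>m y \<and> (\<forall>z \<in> chroms l. A \<subseteq>\<^sub>m z \<longrightarrow> f z \<le> f y)}"

definition Psi_at :: "nat \<Rightarrow> (assignment \<Rightarrow> real) \<Rightarrow> assignment \<Rightarrow> nat \<Rightarrow> bool set" where
  "Psi_at l f A v = {the (y v) | y. y \<in> Psi l f A}"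

text \<open>Epistasis S \<Rightarrow> v. Removing the pair (s, A[s]) from A is A(s := None).\<close>
definition epistatic :: "nat \<Rightarrow> (assignment \<Rightarrow> real) \<Rightarrow> nat set \<Rightarrow> nat \<Rightarrow> bool" where
  "epistatic l f S v \<longleftrightarrow>
     v \<in> loci l \<and> S \<noteq> {} \<and> S \<subseteq> loci l - {v} \<and>
     (\<forall>s \<in> S. \<exists>A. dom A = S \<and> Psi_at l f A v \<noteq> Psi_at l f (A(s := None)) v)"

definition weak_epistasis :: "nat \<Rightarrow> (assignment \<Rightarrow> real) \<Rightarrow> nat set \<Rightarrow> nat \<Rightarrow> bool" where
  "weak_epistasis l f S v \<longleftrightarrow>
     epistatic l f S v \<and> card S \<ge> 2 \<and> \<not> (\<exists>T. T \<noteq> {} \<and> T \<subset> S \<and> epistatic l f T v)"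

definition no_weak_epistasis :: "nat \<Rightarrow> (assignment \<Rightarrow> real) \<Rightarrow> bool" where
  "no_weak_epistasis l f \<longleftrightarrow> (\<forall>S v. \<not> weak_epistasis l f S v)"

text \<open>IN^i(v) in the epistatic graph (edge u -> w iff {u} => w).\<close>
fun IN :: "nat \<Rightarrow> (assignment \<Rightarrow> real) \<Rightarrow> nat \<Rightarrow> nat \<Rightarrow> nat set" where
  "IN l f 0 v = {v}"
| "IN l f (Suc i) v = {u. \<exists>w \<in> IN l f i v. epistatic l f {u} w}"

definition IN_star :: "nat \<Rightarrow> (assignment \<Rightarrow> real) \<Rightarrow> nat \<Rightarrow> nat set" where
  "IN_star l f v = (\<Union>i \<in> {..<l}. IN l f i v)"

definition stationary_optimum :: "nat \<Rightarrow> (assignment \<Rightarrow> real) \<Rightarrow> assignment \<Rightarrow> bool" where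
  "stationary_optimum l f A \<longleftrightarrow>
     is_assignment l A \<and> dom A \<noteq> {} \<and>
     (\<forall>A' R. A' \<noteq> A \<and> dom A' = dom A \<and> dom R = loci l - dom A \<longrightarrow>
        f (R ++ A') < f (R ++ A))"

definition min_stationary_optimum :: "nat \<Rightarrow> (assignment \<Rightarrow> real) \<Rightarrow> nat \<Rightarrow> assignment \<Rightarrow> bool" where
  "min_stationary_optimum l f v A \<longleftrightarrow>
     stationary_optimum l f A \<and> v \<in> dom A \<and>
     (\<forall>B. stationary_optimum l f B \<and> v \<in> dom B \<longrightarrow> card (dom A) \<le> card (dom B))"

end

theory Submission
  imports Defs
begin

text \<open>A stationary optimum A agrees with g, and every constrained optimum under a
  constraint disjoint from the coverage of A contains A. Hence fixing a locus u outside
  the coverage cannot change the optimal value at a covered locus w: the coverage is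
  closed under predecessors in the epistatic graph and so contains IN*(v). Conversely,
  without weak epistasis every epistasis on a locus is witnessed by a single predecessor,
  so constraints outside the predecessor-closed set IN*(v) leave the optimal values on it
  equal to those of g. This makes g restricted to IN*(v) a stationary optimum, which is
  then the smallest one.\<close>

lemma finite_chroms: "finite (chroms l)"
  using finite_set_of_finite_maps[of "loci l" "UNIV :: bool set"]
  by (simp add: chroms_def loci_def)

lemma map_le_iff_eq_restrict_dom: "A \<subseteq>\<^sub>m y \<longleftrightarrow> A = y |` dom A"
  by (auto simp: map_le_def restrict_map_def fun_eq_iff domIff)

lemma restrict_diff_map_add_restrict:
  "dom y \<subseteq> L \<Longrightarrow> y |` (L - D) ++ y |` D = y"
  by (rule ext) (auto simp: map_add_def restrict_map_def domIff split: option.splits)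

lemma map_add_restrict_dom: "(R ++ A) |` dom A = A"
  by (auto simp: fun_eq_iff restrict_map_def map_add_def domIff split: option.splits)

lemma Psi_nonempty:
  assumes "dom A \<subseteq> loci l"
  shows "Psi l f A \<noteq> {}"
proof -
  define S where "S = {z \<in> chroms l. A \<subseteq>\<^sub>m z}"
  define base :: assignment where "base x = (if x \<in> loci l then Some False else None)" for x
  have "dom base = loci l"
    by (auto simp: base_def dom_def)
  with assms have "base ++ A \<in> S"
    by (auto simp: S_def chroms_def)
  moreover have fin: "finite S"
    using finite_chroms by (simp add: S_def)
  ultimately have "Max (f ` S) \<in> f ` S"
    by (intro Max_in) auto
  then obtain y where y: "Max (f ` S) = f y" "y \<in> S"
    by (rule imageE)
  with fin have "\<forall>z \<in> S. f z \<le> f y"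
    by (metis Max_ge finite_imageI imageI)
  with y have "y \<in> Psi l f A"
    by (simp add: Psi_def S_def)
  then show ?thesis
    by blast
qed

lemma Psi_eq_singleton_imp_less:
  assumes Psi: "Psi l f A = {y}" and z: "z \<in> chroms l" "A \<subseteq>\<^sub>m z" and "z \<noteq> y"
  shows "f z < f y"
proof -
  have le: "f w \<le> f y" if "w \<in> chroms l" "A \<subseteq>\<^sub>m w" for w
    using Psi that unfolding Psi_def by blast
  have "f z \<noteq> f y"
  proof
    assume "f z = f y"
    with z le have "z \<in> Psi l f A" unfolding Psi_def by auto
    with Psi \<open>z \<noteq> y\<close> show False by blast
  qed
  with le[OF z] show ?thesis by simp
qed

lemma Psi_at_eq_Psi_at_empty:
  assumes x: "x \<in> loci l" and dom: "dom A \<subseteq> loci l - {x}"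
    and not_epistatic: "\<And>S. S \<subseteq> dom A \<Longrightarrow> \<not> epistatic l f S x"
  shows "Psi_at l f A x = Psi_at l f Map.empty x"
  using dom not_epistatic
proof (induction "card (dom A)" arbitrary: A rule: less_induct)
  case less
  show ?case
  proof (cases "dom A = {}")
    case True
    then show ?thesis by simp
  next
    case False
    have fin: "finite (dom A)"
      using finite_subset[OF less.prems(1)] by (simp add: loci_def)
    have "\<not> epistatic l f (dom A) x"
      using less.prems(2) by blast
    with x False less.prems(1) obtain s where s: "s \<in> dom A"
      and removable: "\<And>A'. dom A' = dom A \<Longrightarrow> Psi_at l f A' x = Psi_at l f (A'(s := None)) x"
      unfolding epistatic_def by blast
    have "card (dom A) > 0"
      using s fin card_gt_0_iff by blast
    then have "card (dom (A(s := None))) < card (dom A)"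
      using s fin by simp
    moreover have "dom (A(s := None)) \<subseteq> loci l - {x}"
      using less.prems(1) by auto
    moreover have "\<not> epistatic l f S x" if "S \<subseteq> dom (A(s := None))" for S
      using that less.prems(2)[of S] by auto
    ultimately have "Psi_at l f (A(s := None)) x = Psi_at l f Map.empty x"
      by (rule less.hyps)
    with removable show ?thesis by simp
  qed
qed

lemma stationary_optimum_map_le_Psi:
  assumes SO: "stationary_optimum l f A" and disj: "dom B \<inter> dom A = {}"
    and y: "y \<in> Psi l f B"
  shows "A \<subseteq>\<^sub>m y"
proof (rule ccontr)
  \<comment> \<open>Replacing the part of y on the coverage of A by A respects B and strictly
    improves y.\<close>
  assume "\<not> A \<subseteq>\<^sub>m y"
  then have ne: "y |` dom A \<noteq> A"
    by (metis map_le_iff_eq_restrict_dom)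
  have y_chrom: "dom y = loci l" and By: "B \<subseteq>\<^sub>m y"
    using y by (auto simp: Psi_def chroms_def)
  have A_loci: "dom A \<subseteq> loci l"
    using SO by (simp add: stationary_optimum_def is_assignment_def)
  define R where "R = y |` (loci l - dom A)"
  have R_dom: "dom R = loci l - dom A"
    using y_chrom by (auto simp: R_def)
  have "dom (y |` dom A) = dom A"
    using y_chrom A_loci by auto
  with SO ne R_dom have "f (R ++ y |` dom A) < f (R ++ A)"
    unfolding stationary_optimum_def by blast
  moreover have "R ++ y |` dom A = y"
    unfolding R_def using y_chrom by (simp add: restrict_diff_map_add_restrict)
  moreover have "f (R ++ A) \<le> f y"
  proof -
    have "R ++ A \<in> chroms l"
      using R_dom A_loci by (auto simp: chroms_def)
    moreover have "B \<subseteq>\<^sub>m R ++ A"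
      unfolding map_le_def
    proof
      fix a
      assume a: "a \<in> dom B"
      then have "a \<in> loci l - dom A"
        using disj map_le_implies_dom_le[OF By] y_chrom by auto
      with a By show "B a = (R ++ A) a"
        by (auto simp: R_def map_add_def map_le_def domIff)
    qed
    ultimately show ?thesis
      using y unfolding Psi_def by blast
  qed
  ultimately show False by simp
qed

lemma epistatic_singleton_subset:
  assumes no_weak: "no_weak_epistasis l f" and "epistatic l f S x"
  shows "\<exists>u\<in>S. epistatic l f {u} x"
  using assms(2)
proof (induction "card S" arbitrary: S rule: less_induct)
  case less
  have ne: "S \<noteq> {}" and S_loci: "S \<subseteq> loci l - {x}"
    using less.prems by (simp_all add: epistatic_def)
  have fin: "finite S"
    using finite_subset[OF S_loci] by (simp add: loci_def)
  show ?case
  proof (cases "card S \<ge> 2")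
    case True
    have "\<not> weak_epistasis l f S x"
      using no_weak by (simp add: no_weak_epistasis_def)
    with True less.prems obtain T where T: "T \<noteq> {}" "T \<subset> S" "epistatic l f T x"
      unfolding weak_epistasis_def by blast
    with fin less.hyps[of T] show ?thesis
      by (meson psubset_card_mono psubset_imp_subset subsetD)
  next
    case False
    with fin ne have "card S = 1"
      using card_gt_0_iff[of S] by linarith
    with less.prems show ?thesis
      by (metis card_1_singletonE singletonI)
  qed
qed

definition predecessor_closed :: "nat \<Rightarrow> (assignment \<Rightarrow> real) \<Rightarrow> nat set \<Rightarrow> bool" where
  "predecessor_closed l f C \<longleftrightarrow> (\<forall>u w. w \<in> C \<longrightarrow> epistatic l f {u} w \<longrightarrow> u \<in> C)"

lemma IN_subset_loci: "v \<in> loci l \<Longrightarrow> IN l f i v \<subseteq> loci l"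
  by (induction i) (auto simp: epistatic_def)

lemma IN_subset_predecessor_closed:
  "predecessor_closed l f C \<Longrightarrow> v \<in> C \<Longrightarrow> IN l f i v \<subseteq> C"
  by (induction i) (auto simp: predecessor_closed_def)

lemma IN_subset_IN_star:
  assumes v: "v \<in> loci l"
  shows "IN l f i v \<subseteq> IN_star l f v"
proof -
  \<comment> \<open>The cumulative unions P n stay constant once they stop growing, so they stabilise
    after at most l steps.\<close>
  define P where "P n = (\<Union>i<n. IN l f i v)" for n
  have P_loci: "P n \<subseteq> loci l" for n
    using IN_subset_loci[OF v] by (auto simp: P_def)
  then have "range P \<subseteq> Pow (loci l)"
    by blast
  then have "finite (range P)"
    by (rule finite_subset) (simp add: loci_def)
  moreover have "mono P"
    unfolding P_def by (intro monoI UN_mono) auto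
  moreover have "P n = P (Suc n) \<longrightarrow> P (Suc n) = P (Suc (Suc n))" for n
  proof
    assume stable: "P n = P (Suc n)"
    have "IN l f n v \<subseteq> P (Suc n)"
      unfolding P_def by blast
    with stable have IN_n: "IN l f n v \<subseteq> P n"
      by simp
    have "IN l f (Suc n) v \<subseteq> P (Suc n)"
    proof
      fix u
      assume "u \<in> IN l f (Suc n) v"
      then obtain w where w: "w \<in> IN l f n v" and e: "epistatic l f {u} w"
        by auto
      from w IN_n obtain i where "i < n" "w \<in> IN l f i v"
        unfolding P_def by blast
      with e have "u \<in> IN l f (Suc i) v" "Suc i < Suc n"
        by auto
      then show "u \<in> P (Suc n)"
        unfolding P_def by blast
    qed
    moreover have "P (Suc (Suc n)) = IN l f (Suc n) v \<union> P (Suc n)"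
      by (simp add: P_def lessThan_Suc)
    ultimately show "P (Suc n) = P (Suc (Suc n))"
      by blast
  qed
  ultimately have "\<exists>N. (\<forall>n\<le>N. \<forall>m\<le>N. m < n \<longrightarrow> P m \<subset> P n) \<and> (\<forall>n\<ge>N. P N = P n)"
    by (intro finite_mono_remains_stable_implies_strict_prefix) auto
  then have "P (card (loci l)) = (\<Union>n. P n)"
    using P_loci by (intro finite_mono_strict_prefix_implies_finite_fixpoint) (auto simp: loci_def)
  then have P_l: "P l = (\<Union>n. P n)"
    by (simp add: loci_def)
  have "IN l f i v \<subseteq> (\<Union>n. P n)"
    unfolding P_def by blast
  then have "IN l f i v \<subseteq> P l"
    by (simp only: P_l)
  then show ?thesis
    by (simp add: IN_star_def P_def)
qed

lemma predecessor_closed_IN_star: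
  assumes "v \<in> loci l"
  shows "predecessor_closed l f (IN_star l f v)"
  unfolding predecessor_closed_def
proof (intro allI impI)
  fix u w
  assume "w \<in> IN_star l f v" and e: "epistatic l f {u} w"
  then obtain i where "w \<in> IN l f i v"
    by (auto simp: IN_star_def)
  with e have "u \<in> IN l f (Suc i) v"
    by auto
  with IN_subset_IN_star[OF assms] show "u \<in> IN_star l f v"
    by blast
qed

locale unique_maximizer =
  fixes l :: nat and f :: "assignment \<Rightarrow> real" and g :: assignment
  assumes g_chrom: "g \<in> chroms l"
    and g_unique_max: "\<forall>y \<in> chroms l. y \<noteq> g \<longrightarrow> f y < f g"
begin

lemma dom_g: "dom g = loci l"
  using g_chrom by (simp add: chroms_def)

lemma Psi_empty: "Psi l f Map.empty = {g}"
  using g_chrom g_unique_max unfolding Psi_def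
  by (auto simp: less_imp_le) (meson less_imp_le not_le order_refl)

lemma Psi_at_empty: "Psi_at l f Map.empty x = {the (g x)}"
  by (simp add: Psi_at_def Psi_empty)

lemma stationary_optimum_eq_restrict:
  assumes "stationary_optimum l f A"
  shows "A = g |` dom A"
proof -
  have "A \<subseteq>\<^sub>m g"
    using stationary_optimum_map_le_Psi[OF assms, of Map.empty g] Psi_empty by simp
  then show ?thesis
    by (metis map_le_iff_eq_restrict_dom)
qed

lemma predecessor_closed_stationary_optimum:
  assumes SO: "stationary_optimum l f A"
  shows "predecessor_closed l f (dom A)"
  unfolding predecessor_closed_def
proof (intro allI impI)
  fix u w
  assume w: "w \<in> dom A" and e: "epistatic l f {u} w"
  show "u \<in> dom A"
  proof (rule ccontr)
    assume u: "u \<notin> dom A"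
    from e obtain B where B: "dom B = {u}" "Psi_at l f B w \<noteq> Psi_at l f (B(u := None)) w"
      unfolding epistatic_def by blast
    have "dom (B(u := None)) = {}"
      using B(1) by simp
    then have "B(u := None) = Map.empty"
      by (metis dom_eq_empty_conv)
    with B(2) have ne: "Psi_at l f B w \<noteq> {the (g w)}"
      by (simp add: Psi_at_empty)
    have agree: "y w = g w" if y: "y \<in> Psi l f B" for y
    proof -
      have "A \<subseteq>\<^sub>m y"
        using stationary_optimum_map_le_Psi[OF SO _ y] B(1) u by auto
      moreover have "A w = g w"
        using stationary_optimum_eq_restrict[OF SO] w by (metis restrict_in)
      ultimately show ?thesis
        using w by (auto simp: map_le_def)
    qed
    have "Psi l f B \<noteq> {}"
      using B(1) e by (intro Psi_nonempty) (simp add: epistatic_def)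
    have "Psi_at l f B w = (\<lambda>y. the (y w)) ` Psi l f B"
      by (auto simp: Psi_at_def)
    also have "\<dots> = (\<lambda>y. the (g w)) ` Psi l f B"
      using agree by (simp cong: image_cong)
    also have "\<dots> = {the (g w)}"
      using \<open>Psi l f B \<noteq> {}\<close> image_constant by (metis ex_in_conv)
    finally have "Psi_at l f B w = {the (g w)}" .
    with ne show False ..
  qed
qed

lemma Psi_at_outside_predecessor_closed:
  assumes no_weak: "no_weak_epistasis l f" and closed: "predecessor_closed l f C"
    and x: "x \<in> C" "x \<in> loci l" and R: "dom R \<subseteq> loci l - C"
  shows "Psi_at l f R x = {the (g x)}"
proof -
  have "\<not> epistatic l f S x" if "S \<subseteq> dom R" for S
    using epistatic_singleton_subset[OF no_weak] closed x R that
    unfolding predecessor_closed_def by blast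
  with x R have "Psi_at l f R x = Psi_at l f Map.empty x"
    by (intro Psi_at_eq_Psi_at_empty) auto
  then show ?thesis
    by (simp add: Psi_at_empty)
qed

lemma Psi_outside_predecessor_closed:
  assumes no_weak: "no_weak_epistasis l f" and closed: "predecessor_closed l f C"
    and C: "C \<subseteq> loci l" and R: "dom R = loci l - C"
  shows "Psi l f R = {R ++ g |` C}"
proof -
  have "y = R ++ g |` C" if y: "y \<in> Psi l f R" for y
  proof
    fix x
    have y_chrom: "dom y = loci l" and Ry: "R \<subseteq>\<^sub>m y"
      using y by (auto simp: Psi_def chroms_def)
    show "y x = (R ++ g |` C) x"
    proof (cases "x \<in> C")
      case True
      have "the (y x) \<in> Psi_at l f R x"
        unfolding Psi_at_def using y by blast
      moreover have "Psi_at l f R x = {the (g x)}"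
        using True C R by (intro Psi_at_outside_predecessor_closed[OF no_weak closed]) auto
      ultimately have "the (y x) = the (g x)"
        by (metis singletonD)
      moreover obtain a b where "y x = Some a" "g x = Some b"
        using True C y_chrom dom_g by blast
      ultimately have "y x = g x"
        by simp
      moreover have "(R ++ g |` C) x = g x"
        using True \<open>g x = Some b\<close> by (simp add: map_add_dom_app_simps(1))
      ultimately show ?thesis
        by simp
    next
      case False
      then have "(R ++ g |` C) x = R x"
        by (simp add: map_add_dom_app_simps(3))
      moreover have "R x = y x"
      proof (cases "x \<in> dom R")
        case True
        with Ry show ?thesis
          by (simp add: map_le_def)
      next
        case outside: False
        with False R y_chrom have "x \<notin> dom y"
          by auto
        with outside show ?thesis
          by (simp add: domIff)
      qed
      ultimately show ?thesis
        by simp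
    qed
  qed
  moreover have "Psi l f R \<noteq> {}"
    using R by (intro Psi_nonempty) auto
  ultimately show ?thesis
    by blast
qed

lemma stationary_optimum_restrict:
  assumes no_weak: "no_weak_epistasis l f" and closed: "predecessor_closed l f C"
    and C: "C \<subseteq> loci l" "C \<noteq> {}"
  shows "stationary_optimum l f (g |` C)"
proof -
  have dom_gC: "dom (g |` C) = C"
    using C dom_g by auto
  have "f (R ++ A') < f (R ++ g |` C)"
    if A': "A' \<noteq> g |` C" "dom A' = C" and R: "dom R = loci l - C" for A' R
  proof (rule Psi_eq_singleton_imp_less)
    show "Psi l f R = {R ++ g |` C}"
      by (rule Psi_outside_predecessor_closed[OF no_weak closed C(1) R])
    show "R ++ A' \<in> chroms l"
      using A' R C by (auto simp: chroms_def)
    have "dom R \<inter> dom A' = {}"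
      using A' R by auto
    then show "R \<subseteq>\<^sub>m R ++ A'"
      by (metis map_add_comm map_le_map_add)
    show "R ++ A' \<noteq> R ++ g |` C"
      using A' dom_gC by (metis map_add_restrict_dom)
  qed
  with C dom_gC show ?thesis
    unfolding stationary_optimum_def is_assignment_def by auto
qed

lemma min_stationary_optimum_iff:
  assumes no_weak: "no_weak_epistasis l f" and v: "v \<in> loci l"
  shows "min_stationary_optimum l f v A \<longleftrightarrow> A = g |` IN_star l f v"
proof -
  define C where "C = IN_star l f v"
  have C_loci: "C \<subseteq> loci l"
    using IN_subset_loci[OF v] by (auto simp: C_def IN_star_def)
  have "v \<in> IN l f 0 v" "0 < l"
    using v by (simp_all add: loci_def)
  then have vC: "v \<in> C"
    unfolding C_def IN_star_def by blast
  have SO_C: "stationary_optimum l f (g |` C)"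
    using stationary_optimum_restrict[OF no_weak predecessor_closed_IN_star[OF v]] C_loci vC
    by (auto simp: C_def)
  have dom_gC: "dom (g |` C) = C"
    using C_loci dom_g by auto
  have C_le: "C \<subseteq> dom B" and fin: "finite (dom B)"
    if "stationary_optimum l f B" "v \<in> dom B" for B
  proof -
    show "C \<subseteq> dom B"
      using IN_subset_predecessor_closed[OF predecessor_closed_stationary_optimum[OF that(1)] that(2)]
      by (auto simp: C_def IN_star_def)
    show "finite (dom B)"
      using that(1) finite_subset by (auto simp: stationary_optimum_def is_assignment_def loci_def)
  qed
  show ?thesis
    unfolding C_def[symmetric]
  proof
    assume min: "min_stationary_optimum l f v A"
    then have SO: "stationary_optimum l f A" "v \<in> dom A"
      unfolding min_stationary_optimum_def by blast+
    have "card (dom A) \<le> card (dom (g |` C))"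
      using min SO_C vC dom_gC unfolding min_stationary_optimum_def by blast
    then have "card (dom A) \<le> card C"
      by (simp only: dom_gC)
    then have "dom A = C"
      using card_seteq[OF fin[OF SO] C_le[OF SO]] by simp
    with stationary_optimum_eq_restrict[OF SO(1)] show "A = g |` C"
      by simp
  next
    assume A: "A = g |` C"
    have "card C \<le> card (dom B)" if "stationary_optimum l f B" "v \<in> dom B" for B
      using card_mono[OF fin[OF that] C_le[OF that]] .
    with SO_C vC show "min_stationary_optimum l f v A"
      unfolding min_stationary_optimum_def A dom_gC by blast
  qed
qed

end

theorem theorem1:
  fixes l :: nat and f :: "assignment \<Rightarrow> real" and g :: assignment
  assumes "l \<ge> 1"
    and g_chrom: "g \<in> chroms l"
    and g_unique_max: "\<forall>y \<in> chroms l. y \<noteq> g \<longrightarrow> f y < f g"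
    and no_weak: "no_weak_epistasis l f"
  shows "\<forall>v \<in> loci l.
           (\<forall>A. min_stationary_optimum l f v A \<longrightarrow> dom A = IN_star l f v) \<and>
           (\<forall>A. min_stationary_optimum l f v A \<longleftrightarrow> A = g |` IN_star l f v)"
proof -
  interpret unique_maximizer l f g
    using g_chrom g_unique_max by unfold_locales
  have "dom (g |` IN_star l f v) = IN_star l f v" if "v \<in> loci l" for v
    using IN_subset_loci[OF that] dom_g by (auto simp: IN_star_def)
  with min_stationary_optimum_iff[OF no_weak] show ?thesis
    by auto
qed

end
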